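(* Let $m,n\in\mathbb{Z}\setminus\{0\}$ and let $q$ be an $(m,n)$-phenotype with $q\neq1$ and $q\neq\infty$. Then every transitive $\mathrm{BS}(m,n)$-action of phenotype $q$ on an infinite set fails to be primitive. In particular, no transitive $\mathrm{BS}(m,n)$-action of phenotype $q$ is highly transitive.
   Context: $\mathrm{BS}(m,n)=\langle b,t\mid tb^mt^{-1}=b^n\rangle$; actions are on the right. For a prime $p$, $|k|_p$ is the $p$-adic valuation. For $L\in\mathbb{Z}_{\ge1}$, $\mathrm{Ph}_{m,n}(L)=\prod p^{|L|_p}$ over primes $p$ with $|m|_p=|n|_p$ and $|L|_p>|n|_p$; $\mathrm{Ph}_{m,n}(\infty)=\infty$. The phenotype of a transitive action with stabilizer $\Lambda$ is $\mathrm{Ph}_{m,n}([\langle b\rangle:\langle b\rangle\cap\Lambda])$; an $(m,n)$-phenotype is a value so obtained. An action is primitive if it preserves no equivalence relation other than equality and the full relation; highly transitive means $d$-transitive (on $d$-tuples of distinct points) for all $d$. *)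

theory Defs
  imports Main "HOL-Computational_Algebra.Primes" "HOL-Library.Extended_Nat"
begin

definition zpw :: "'a set \<Rightarrow> ('a \<Rightarrow> 'a) \<Rightarrow> int \<Rightarrow> 'a \<Rightarrow> 'a" where
  "zpw X f k = (if k \<ge> 0 then f ^^ nat k else (inv_into X f) ^^ nat (- k))"

text \<open>A right action of BS(m,n) = < b, t | t b^m t^-1 = b^n > on X, given by the
  actions beta of b and tau of t: x.b = beta x, x.t = tau x.
  The relation reads  ((x.t).b^m).t^-1 = x.b^n.\<close>
definition BS_action :: "int \<Rightarrow> int \<Rightarrow> 'a set \<Rightarrow> ('a \<Rightarrow> 'a) \<Rightarrow> ('a \<Rightarrow> 'a) \<Rightarrow> bool" where
  "BS_action m n X \<beta> \<tau> \<longleftrightarrow> bij_betw \<beta> X X \<and> bij_betw \<tau> X X \<and>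
     (\<forall>x\<in>X. inv_into X \<tau> (zpw X \<beta> m (\<tau> x)) = zpw X \<beta> n x)"

inductive_set gmaps :: "'a set \<Rightarrow> ('a \<Rightarrow> 'a) \<Rightarrow> ('a \<Rightarrow> 'a) \<Rightarrow> ('a \<Rightarrow> 'a) set"
  for X :: "'a set" and \<beta> :: "'a \<Rightarrow> 'a" and \<tau> :: "'a \<Rightarrow> 'a" where
  gm_id: "id \<in> gmaps X \<beta> \<tau>"
| gm_b: "g \<in> gmaps X \<beta> \<tau> \<Longrightarrow> \<beta> \<circ> g \<in> gmaps X \<beta> \<tau>"
| gm_t: "g \<in> gmaps X \<beta> \<tau> \<Longrightarrow> \<tau> \<circ> g \<in> gmaps X \<beta> \<tau>"
| gm_bi: "g \<in> gmaps X \<beta> \<tau> \<Longrightarrow> inv_into X \<beta> \<circ> g \<in> gmaps X \<beta> \<tau>"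
| gm_ti: "g \<in> gmaps X \<beta> \<tau> \<Longrightarrow> inv_into X \<tau> \<circ> g \<in> gmaps X \<beta> \<tau>"

definition transitive_action :: "'a set \<Rightarrow> ('a \<Rightarrow> 'a) \<Rightarrow> ('a \<Rightarrow> 'a) \<Rightarrow> bool" where
  "transitive_action X \<beta> \<tau> \<longleftrightarrow> X \<noteq> {} \<and>
     (\<forall>x\<in>X. \<forall>y\<in>X. \<exists>g\<in>gmaps X \<beta> \<tau>. g x = y)"

definition primitive_action :: "'a set \<Rightarrow> ('a \<Rightarrow> 'a) \<Rightarrow> ('a \<Rightarrow> 'a) \<Rightarrow> bool" where
  "primitive_action X \<beta> \<tau> \<longleftrightarrow>
     (\<forall>R. equiv X R \<and> (\<forall>g\<in>gmaps X \<beta> \<tau>. \<forall>(x,y)\<in>R. (g x, g y) \<in> R)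
          \<longrightarrow> R = Id_on X \<or> R = X \<times> X)"

definition highly_transitive_action :: "'a set \<Rightarrow> ('a \<Rightarrow> 'a) \<Rightarrow> ('a \<Rightarrow> 'a) \<Rightarrow> bool" where
  "highly_transitive_action X \<beta> \<tau> \<longleftrightarrow>
     (\<forall>d::nat. \<forall>xs ys. length xs = d \<and> length ys = d \<and> distinct xs \<and> distinct ys \<and>
        set xs \<subseteq> X \<and> set ys \<subseteq> X \<longrightarrow> (\<exists>g\<in>gmaps X \<beta> \<tau>. map g xs = ys))"

text \<open>[<b> : <b> \<inter> Stab(x0)]: the subgroup {k. b^k \<in> Stab(x0)} of Z (b has infinite order
  in BS(m,n)); its index is its least positive element, or infinity if it is trivial.\<close>
definition b_index :: "'a set \<Rightarrow> ('a \<Rightarrow> 'a) \<Rightarrow> 'a \<Rightarrow> enat" where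
  "b_index X \<beta> x0 =
     (let H = {k::int. zpw X \<beta> k x0 = x0} in
      if \<exists>k\<in>H. k \<noteq> 0 then enat (nat (LEAST k. k > 0 \<and> k \<in> H)) else \<infinity>)"

definition Ph :: "int \<Rightarrow> int \<Rightarrow> enat \<Rightarrow> enat" where
  "Ph m n L = (case L of \<infinity> \<Rightarrow> \<infinity>
     | enat l \<Rightarrow> enat (\<Prod>p\<in>{p::nat. prime p \<and> multiplicity (int p) m = multiplicity (int p) n
                                 \<and> multiplicity p l > multiplicity (int p) n}.
                        p ^ multiplicity p l))"

definition phenotype :: "int \<Rightarrow> int \<Rightarrow> 'a set \<Rightarrow> ('a \<Rightarrow> 'a) \<Rightarrow> 'a \<Rightarrow> enat" where
  "phenotype m n X \<beta> x0 = Ph m n (b_index X \<beta> x0)"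

text \<open>(m,n)-phenotype: value of the phenotype of some transitive action (BS(m,n) is countable,
  so transitive actions live on countable sets, here realised inside nat).\<close>
definition is_phenotype :: "int \<Rightarrow> int \<Rightarrow> enat \<Rightarrow> bool" where
  "is_phenotype m n q \<longleftrightarrow> (\<exists>(X::nat set) \<beta> \<tau> x0. BS_action m n X \<beta> \<tau> \<and>
      transitive_action X \<beta> \<tau> \<and> x0 \<in> X \<and> phenotype m n X \<beta> x0 = q)"

end

theory Submission
  imports Defs
begin

text \<open>Let \<open>L\<close> be the \<open>b\<close>-period of the base point. Since the phenotype is finite and
  \<open>\<noteq> 1\<close>, there is a prime \<open>p\<close> with \<open>v\<^sub>p(m) = v\<^sub>p(n) < v\<^sub>p(L)\<close>. The property
  \<open>v\<^sub>p(L\<^sub>x) > v\<^sub>p(n)\<close> of the \<open>b\<close>-period \<open>L\<^sub>x\<close> of a point \<open>x\<close> is preserved by \<open>b\<close> trivially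
  and by \<open>t\<close> because \<open>t\<close> conjugates \<open>b\<^sup>m\<close> to \<open>b\<^sup>n\<close> and \<open>v\<^sub>p(m) = v\<^sub>p(n)\<close>; by
  transitivity it holds everywhere. Then the partition of every \<open>b\<close>-orbit into the orbits of
  \<open>b\<^bsup>L\<^sub>x/p\<^esup>\<close> is invariant under the whole group. Its classes have \<open>p\<close> elements, so on an
  infinite set it is a proper nontrivial congruence. Finally a highly transitive action is
  primitive, since 2-transitivity moves a related pair onto an unrelated one.\<close>

section \<open>Integer powers of a bijection\<close>

lemma zpw_closed:
  assumes "bij_betw f X X" and "x \<in> X"
  shows "zpw X f k x \<in> X"
proof -
  have "(g ^^ i) x \<in> X" if "bij_betw g X X" for g i
    using that by (induction i) (auto simp: bij_betw_apply assms(2))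
  then show ?thesis
    using assms(1) bij_betw_inv_into[OF assms(1)] by (simp add: zpw_def)
qed

lemma zpw_0 [simp]: "zpw X f 0 x = x"
  by (simp add: zpw_def)

lemma zpw_1: "zpw X f 1 x = f x"
  by (simp add: zpw_def)

lemma zpw_minus_1: "zpw X f (-1) x = inv_into X f x"
  by (simp add: zpw_def)

lemma zpw_succ:
  assumes b: "bij_betw f X X" and x: "x \<in> X"
  shows "zpw X f (k + 1) x = f (zpw X f k x)"
proof -
  consider "k \<ge> 0" | "k = -1" | "k < -1" by linarith
  then show ?thesis
  proof cases
    case 1
    then have "nat (k + 1) = Suc (nat k)" by simp
    with 1 show ?thesis by (simp add: zpw_def)
  next
    case 2
    then show ?thesis using bij_betw_inv_into_right[OF b x] by (simp add: zpw_def)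
  next
    case 3
    then have "nat (-k) = Suc (nat (-(k + 1)))" by simp
    with 3 have "zpw X f k x = inv_into X f (zpw X f (k + 1) x)" by (simp add: zpw_def)
    then show ?thesis using bij_betw_inv_into_right[OF b zpw_closed[OF b x]] by simp
  qed
qed

lemma zpw_pred:
  assumes b: "bij_betw f X X" and x: "x \<in> X"
  shows "zpw X f (k - 1) x = inv_into X f (zpw X f k x)"
  using zpw_succ[OF b x, of "k - 1"] bij_betw_inv_into_left[OF b zpw_closed[OF b x, of "k - 1"]]
  by simp

lemma zpw_add:
  assumes b: "bij_betw f X X" and x: "x \<in> X"
  shows "zpw X f a (zpw X f c x) = zpw X f (a + c) x"
proof (induction a rule: int_induct[where k = 0])
  case base
  then show ?case by simp
next
  case (step1 i)
  then show ?case
    using zpw_succ[OF b x, of "i + c"] zpw_succ[OF b zpw_closed[OF b x], of i]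
    by (simp add: algebra_simps)
next
  case (step2 i)
  then show ?case
    using zpw_pred[OF b x, of "i + c"] zpw_pred[OF b zpw_closed[OF b x], of i]
    by (simp add: algebra_simps)
qed

lemma zpw_fixed_shift_iff:
  assumes b: "bij_betw f X X" and x: "x \<in> X"
  shows "zpw X f k (zpw X f c x) = zpw X f c x \<longleftrightarrow> zpw X f k x = x"
proof
  assume "zpw X f k (zpw X f c x) = zpw X f c x"
  then have "zpw X f (-c) (zpw X f k (zpw X f c x)) = zpw X f (-c) (zpw X f c x)" by simp
  then show "zpw X f k x = x"
    using zpw_add[OF b x] zpw_add[OF b zpw_closed[OF b x]] by simp
next
  assume "zpw X f k x = x"
  then show "zpw X f k (zpw X f c x) = zpw X f c x"
    using zpw_add[OF b x, of k c] zpw_add[OF b x, of c k] by (simp add: add.commute)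
qed

lemma zpw_eq_iff:
  assumes b: "bij_betw f X X" and x: "x \<in> X"
  shows "zpw X f a x = zpw X f c x \<longleftrightarrow> zpw X f (a - c) x = x"
  using zpw_fixed_shift_iff[OF b x, of "a - c" c] zpw_add[OF b x, of "a - c" c] by simp

lemma zpw_fixed_mult:
  assumes b: "bij_betw f X X" and x: "x \<in> X" and fixed: "zpw X f k x = x"
  shows "zpw X f (k * j) x = x"
proof (induction j rule: int_induct[where k = 0])
  case base
  then show ?case by simp
next
  case (step1 i)
  then show ?case using zpw_add[OF b x, of k "k * i"] fixed by (simp add: algebra_simps)
next
  case (step2 i)
  have "zpw X f (-k) x = x" using zpw_add[OF b x, of "-k" k] fixed by simp
  then show ?case using step2 zpw_add[OF b x, of "-k" "k * i"] by (simp add: algebra_simps)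
qed

definition zpw_period :: "'a set \<Rightarrow> ('a \<Rightarrow> 'a) \<Rightarrow> 'a \<Rightarrow> int \<Rightarrow> bool" where
  "zpw_period X f x L \<longleftrightarrow> L > 0 \<and> (\<forall>i. zpw X f i x = x \<longleftrightarrow> L dvd i)"

lemma zpw_period_exists:
  assumes b: "bij_betw f X X" and x: "x \<in> X" and fixed: "zpw X f k x = x" "k \<noteq> 0"
  shows "\<exists>L. zpw_period X f x L"
proof -
  define N where "N = (LEAST i::nat. i > 0 \<and> zpw X f (int i) x = x)"
  define L where "L = int N"
  have "zpw X f \<bar>k\<bar> x = x"
    using zpw_fixed_mult[OF b x fixed(1), of "sgn k"] by (simp add: abs_sgn mult.commute)
  then have "\<exists>i::nat. i > 0 \<and> zpw X f (int i) x = x"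
    using fixed(2) by (intro exI[of _ "nat \<bar>k\<bar>"]) simp
  then have L: "L > 0" "zpw X f L x = x"
    unfolding L_def N_def using LeastI_ex[of "\<lambda>i::nat. i > 0 \<and> zpw X f (int i) x = x"] by auto
  have L_min: "zpw X f i x \<noteq> x" if "0 < i" "i < L" for i
  proof
    assume "zpw X f i x = x"
    then have "N \<le> nat i" unfolding N_def using that(1) by (intro Least_le) auto
    then show False using that L_def by simp
  qed
  have "zpw X f i x = x \<longleftrightarrow> L dvd i" for i
  proof
    assume "zpw X f i x = x"
    then have "zpw X f (i - L * (i div L)) x = x"
      using zpw_eq_iff[OF b x, of i "L * (i div L)"] zpw_fixed_mult[OF b x L(2), of "i div L"]
      by simp
    then have "zpw X f (i mod L) x = x" by (simp add: minus_mult_div_eq_mod)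
    moreover have "0 \<le> i mod L" "i mod L < L" using L(1) by simp_all
    ultimately have "i mod L = 0" using L_min by force
    then show "L dvd i" by auto
  next
    assume "L dvd i"
    then show "zpw X f i x = x" using zpw_fixed_mult[OF b x L(2)] by auto
  qed
  with L(1) show ?thesis unfolding zpw_period_def by blast
qed

lemma zpw_period_shift_iff:
  assumes "bij_betw f X X" and "x \<in> X"
  shows "zpw_period X f (zpw X f c x) L \<longleftrightarrow> zpw_period X f x L"
  using zpw_fixed_shift_iff[OF assms] by (simp add: zpw_period_def)

lemma b_index_eq_period:
  assumes "zpw_period X \<beta> x L"
  shows "b_index X \<beta> x = enat (nat L)"
proof -
  have L: "L > 0" "\<And>i. zpw X \<beta> i x = x \<longleftrightarrow> L dvd i"
    using assms by (auto simp: zpw_period_def)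
  have "(LEAST i. i > 0 \<and> i \<in> {k. zpw X \<beta> k x = x}) = L"
    using L by (intro Least_equality) (auto intro: zdvd_imp_le)
  moreover have "\<exists>k\<in>{k. zpw X \<beta> k x = x}. k \<noteq> 0"
    using L by auto
  ultimately show ?thesis
    by (simp add: b_index_def Let_def)
qed

lemma b_index_finite_imp_period:
  assumes "bij_betw \<beta> X X" and "x \<in> X" and "b_index X \<beta> x \<noteq> \<infinity>"
  shows "\<exists>L. zpw_period X \<beta> x L"
proof -
  from assms(3) obtain k where "zpw X \<beta> k x = x" "k \<noteq> 0"
    unfolding b_index_def Let_def by (auto split: if_splits)
  then show ?thesis using zpw_period_exists[OF assms(1,2)] by blast
qed

section \<open>Prime multiplicities\<close>

lemma multiplicity_int_int: "multiplicity (int p) (int l) = multiplicity p l"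
  by (simp add: multiplicity_def flip: of_nat_power)

lemma solvable_mod_of_dvd_prime_mult:
  fixes P L c k :: int
  assumes P: "prime P" and L: "L > 0" and c: "c \<noteq> 0"
    and v: "multiplicity P L > multiplicity P c" and d: "L dvd P * k"
  shows "\<exists>j. L dvd k - c * j"
proof (cases "k = 0")
  case True
  then show ?thesis by (intro exI[of _ 0]) simp
next
  case False
  define g where "g = gcd L c"
  have Pk: "P * k \<noteq> 0" using False P by auto
  have "g dvd k"
  proof (rule multiplicity_le_imp_dvd)
    show "g \<noteq> 0" using L by (simp add: g_def)
    fix r :: int
    assume r: "prime r"
    show "multiplicity r g \<le> multiplicity r k"
    proof (cases "r = P")
      case True
      have "multiplicity r g \<le> multiplicity r c"
        unfolding g_def by (rule dvd_imp_multiplicity_le[OF _ c]) simp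
      moreover have "multiplicity r L \<le> multiplicity r (P * k)"
        by (rule dvd_imp_multiplicity_le[OF d Pk])
      moreover have "multiplicity P (P * k) = Suc (multiplicity P k)"
        using P False by (intro multiplicity_times_same) auto
      ultimately show ?thesis using True v by simp
    next
      case False
      have "\<not> r dvd P" using False r P primes_dvd_imp_eq by blast
      then have "multiplicity r P = 0" by (rule not_dvd_imp_multiplicity_0)
      have "multiplicity r g \<le> multiplicity r L"
        unfolding g_def by (rule dvd_imp_multiplicity_le) (use L in auto)
      also have "\<dots> \<le> multiplicity r (P * k)" by (rule dvd_imp_multiplicity_le[OF d Pk])
      also have "\<dots> = multiplicity r P + multiplicity r k"
        using r P \<open>k \<noteq> 0\<close> by (intro prime_elem_multiplicity_mult_distrib) auto
      finally show ?thesis using \<open>multiplicity r P = 0\<close> by simp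
    qed
  qed
  then obtain t where t: "k = g * t" by auto
  obtain u w where uw: "u * L + w * c = g" using bezout_int[of L c] unfolding g_def by blast
  have "k - c * (w * t) = L * (u * t)" unfolding t uw[symmetric] by (simp add: algebra_simps)
  then show ?thesis by (intro exI[of _ "w * t"]) simp
qed

lemma multiplicity_gt_of_dvd_mult_iff:
  fixes P A B a b :: int
  assumes P: "prime P" and B: "B \<noteq> 0" and a: "a \<noteq> 0"
    and dvd_iff: "\<And>j. B dvd b * j \<longleftrightarrow> A dvd a * j"
    and v: "multiplicity P A > multiplicity P a"
  shows "multiplicity P B > multiplicity P b"
proof (rule ccontr)
  assume "\<not> ?thesis"
  then have "P ^ multiplicity P B dvd b" by (intro multiplicity_dvd') simp
  then obtain b' where b': "b = P ^ multiplicity P B * b'" by auto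
  obtain w where w: "B = P ^ multiplicity P B * w" "\<not> P dvd w"
    using multiplicity_decompose'[of B P] B P not_prime_unit by blast
  have "b * w = B * b'" using w b' by (simp add: algebra_simps)
  then have "A dvd a * w" using dvd_iff by (metis dvd_triv_left)
  moreover have "w \<noteq> 0" using w B by auto
  moreover have "multiplicity P (a * w) = multiplicity P a + multiplicity P w"
    using P a \<open>w \<noteq> 0\<close> by (intro prime_elem_multiplicity_mult_distrib) auto
  moreover have "multiplicity P w = 0" using w(2) by (rule not_dvd_imp_multiplicity_0)
  ultimately have "multiplicity P A \<le> multiplicity P a"
    using dvd_imp_multiplicity_le[of A "a * w" P] a by simp
  then show False using v by simp
qed

section \<open>Baumslag--Solitar actions\<close>

lemma BS_action_bij:
  assumes "BS_action m n X \<beta> \<tau>"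
  shows "bij_betw \<beta> X X" and "bij_betw \<tau> X X"
  using assms by (auto simp: BS_action_def)

lemma BS_action_conj:
  assumes A: "BS_action m n X \<beta> \<tau>" and y: "y \<in> X"
  shows "zpw X \<beta> m (\<tau> y) = \<tau> (zpw X \<beta> n y)"
proof -
  note b = BS_action_bij(1)[OF A] and t = BS_action_bij(2)[OF A]
  have "inv_into X \<tau> (zpw X \<beta> m (\<tau> y)) = zpw X \<beta> n y"
    using A y by (simp add: BS_action_def)
  then show ?thesis
    using bij_betw_inv_into_right[OF t zpw_closed[OF b bij_betw_apply[OF t y]]] by metis
qed

lemma BS_action_conj_mult:
  assumes A: "BS_action m n X \<beta> \<tau>" and y: "y \<in> X"
  shows "zpw X \<beta> (m * j) (\<tau> y) = \<tau> (zpw X \<beta> (n * j) y)"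
proof -
  note b = BS_action_bij(1)[OF A] and t = BS_action_bij(2)[OF A]
  have nat_case: "zpw X \<beta> (m * int k) (\<tau> z) = \<tau> (zpw X \<beta> (n * int k) z)" if z: "z \<in> X" for k z
  proof (induction k)
    case 0
    show ?case by simp
  next
    case (Suc k)
    have "zpw X \<beta> (m * int (Suc k)) (\<tau> z) = zpw X \<beta> m (zpw X \<beta> (m * int k) (\<tau> z))"
      using zpw_add[OF b bij_betw_apply[OF t z], of m "m * int k"] by (simp add: algebra_simps)
    also have "\<dots> = \<tau> (zpw X \<beta> n (zpw X \<beta> (n * int k) z))"
      using Suc BS_action_conj[OF A zpw_closed[OF b z]] by simp
    also have "\<dots> = \<tau> (zpw X \<beta> (n * int (Suc k)) z)"
      using zpw_add[OF b z, of n "n * int k"] by (simp add: algebra_simps)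
    finally show ?case .
  qed
  show ?thesis
  proof (cases "j \<ge> 0")
    case True
    then show ?thesis using nat_case[OF y, of "nat j"] by simp
  next
    case False
    then obtain k :: nat where k: "j = - int k" by (metis neg_int_cases not_le)
    define w where "w = zpw X \<beta> (n * j) y"
    have w: "w \<in> X" unfolding w_def using zpw_closed[OF b y] .
    have "zpw X \<beta> (n * int k) w = y"
      using zpw_add[OF b y] by (simp add: w_def k)
    then have "\<tau> y = zpw X \<beta> (m * int k) (\<tau> w)"
      using nat_case[OF w] by simp
    then have "zpw X \<beta> (m * j) (\<tau> y) = zpw X \<beta> (m * j + m * int k) (\<tau> w)"
      using zpw_add[OF b bij_betw_apply[OF t w]] by simp
    also have "m * j + m * int k = 0"
      by (simp add: k)
    finally show ?thesis by (simp add: w_def)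
  qed
qed

lemma BS_action_tau_fixed_iff:
  assumes A: "BS_action m n X \<beta> \<tau>" and x: "x \<in> X"
  shows "zpw X \<beta> (m * j) (\<tau> x) = \<tau> x \<longleftrightarrow> zpw X \<beta> (n * j) x = x"
proof -
  have "inj_on \<tau> X" using BS_action_bij(2)[OF A] by (rule bij_betw_imp_inj_on)
  then show ?thesis
    using BS_action_conj_mult[OF A x, of j] zpw_closed[OF BS_action_bij(1)[OF A] x] x
    by (metis inj_on_eq_iff)
qed

lemma BS_action_swap:
  assumes A: "BS_action m n X \<beta> \<tau>"
  shows "BS_action n m X \<beta> (inv_into X \<tau>)"
proof -
  note b = BS_action_bij(1)[OF A] and t = BS_action_bij(2)[OF A]
  have t': "bij_betw (inv_into X \<tau>) X X" using t by (rule bij_betw_inv_into)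
  have "inv_into X (inv_into X \<tau>) (zpw X \<beta> n (inv_into X \<tau> x)) = zpw X \<beta> m x" if x: "x \<in> X" for x
  proof -
    define y where "y = inv_into X \<tau> x"
    have y: "y \<in> X" "\<tau> y = x"
      unfolding y_def using bij_betw_apply[OF t' x] bij_betw_inv_into_right[OF t x] by auto
    have "inv_into X (inv_into X \<tau>) (zpw X \<beta> n y) = \<tau> (zpw X \<beta> n y)"
      by (rule inv_into_inv_into_eq[OF t zpw_closed[OF b y(1)]])
    also have "\<dots> = zpw X \<beta> m x"
      using BS_action_conj[OF A y(1)] y(2) by simp
    finally show ?thesis unfolding y_def .
  qed
  with b t' show ?thesis by (simp add: BS_action_def)
qed

lemma gmaps_closed:
  assumes "bij_betw \<beta> X X" and "bij_betw \<tau> X X" and "g \<in> gmaps X \<beta> \<tau>" and "x \<in> X"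
  shows "g x \<in> X"
  using assms(3)
  by induction (use assms in \<open>auto intro: bij_betw_apply bij_betw_inv_into\<close>)

definition period_multiplicity_gt :: "'a set \<Rightarrow> ('a \<Rightarrow> 'a) \<Rightarrow> int \<Rightarrow> nat \<Rightarrow> 'a \<Rightarrow> bool" where
  "period_multiplicity_gt X f P e x \<longleftrightarrow> (\<exists>L. zpw_period X f x L \<and> multiplicity P L > e)"

lemma period_multiplicity_gt_zpw:
  assumes "bij_betw f X X" and "x \<in> X"
  shows "period_multiplicity_gt X f P e (zpw X f c x) \<longleftrightarrow> period_multiplicity_gt X f P e x"
  using zpw_period_shift_iff[OF assms] by (simp add: period_multiplicity_gt_def)

lemma period_multiplicity_gt_tau:
  assumes A: "BS_action m n X \<beta> \<tau>" and x: "x \<in> X" and P: "prime P"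
    and m: "m \<noteq> 0" and n: "n \<noteq> 0"
    and deep: "period_multiplicity_gt X \<beta> P (multiplicity P n) x"
  shows "period_multiplicity_gt X \<beta> P (multiplicity P m) (\<tau> x)"
proof -
  note b = BS_action_bij(1)[OF A] and t = BS_action_bij(2)[OF A]
  obtain L where L: "zpw_period X \<beta> x L" and vL: "multiplicity P L > multiplicity P n"
    using deep by (auto simp: period_multiplicity_gt_def)
  have "zpw X \<beta> (m * L) (\<tau> x) = \<tau> x"
    using BS_action_tau_fixed_iff[OF A x] L by (simp add: zpw_period_def)
  moreover have "m * L \<noteq> 0" using m L by (simp add: zpw_period_def)
  ultimately obtain L' where L': "zpw_period X \<beta> (\<tau> x) L'"
    using zpw_period_exists[OF b bij_betw_apply[OF t x]] by blast
  have dvd_iff: "L' dvd m * j \<longleftrightarrow> L dvd n * j" for j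
    using BS_action_tau_fixed_iff[OF A x] L L' by (simp add: zpw_period_def)
  have "multiplicity P L' > multiplicity P m"
    by (rule multiplicity_gt_of_dvd_mult_iff[OF P _ n dvd_iff vL])
      (use L' in \<open>simp add: zpw_period_def\<close>)
  with L' show ?thesis by (auto simp: period_multiplicity_gt_def)
qed

lemma period_multiplicity_gt_gmaps:
  assumes A: "BS_action m n X \<beta> \<tau>" and P: "prime P"
    and m: "m \<noteq> 0" and n: "n \<noteq> 0" and e: "multiplicity P m = multiplicity P n"
    and g: "g \<in> gmaps X \<beta> \<tau>" and x: "x \<in> X"
    and deep: "period_multiplicity_gt X \<beta> P (multiplicity P n) x"
  shows "period_multiplicity_gt X \<beta> P (multiplicity P n) (g x)"
  using g
proof induction
  case gm_id
  then show ?case using deep by simp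
next
  case (gm_b g)
  then show ?case
    using period_multiplicity_gt_zpw[OF BS_action_bij(1)[OF A], of "g x" P _ 1]
      gmaps_closed[OF BS_action_bij[OF A] gm_b(1) x] by (simp add: zpw_1)
next
  case (gm_bi g)
  then show ?case
    using period_multiplicity_gt_zpw[OF BS_action_bij(1)[OF A], of "g x" P _ "-1"]
      gmaps_closed[OF BS_action_bij[OF A] gm_bi(1) x] by (simp add: zpw_minus_1)
next
  case (gm_t g)
  then show ?case
    using period_multiplicity_gt_tau[OF A _ P m n] gmaps_closed[OF BS_action_bij[OF A] gm_t(1) x] e
    by simp
next
  case (gm_ti g)
  then show ?case
    using period_multiplicity_gt_tau[OF BS_action_swap[OF A] _ P n m]
      gmaps_closed[OF BS_action_bij[OF A] gm_ti(1) x] e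
    by simp
qed

section \<open>The block system\<close>

text \<open>When \<open>P\<close> divides the period \<open>L\<close> of \<open>x\<close>, the class of \<open>x\<close> is its orbit under
  \<open>f\<^bsup>L div P\<^esup>\<close>, a set of \<open>P\<close> points.\<close>
definition block_rel :: "'a set \<Rightarrow> ('a \<Rightarrow> 'a) \<Rightarrow> int \<Rightarrow> ('a \<times> 'a) set" where
  "block_rel X f P = {(x, y). x \<in> X \<and> (\<exists>k. zpw X f (P * k) x = x \<and> y = zpw X f k x)}"

lemma block_rel_equiv:
  assumes b: "bij_betw f X X"
  shows "equiv X (block_rel X f P)"
proof (rule equivI)
  show "block_rel X f P \<subseteq> X \<times> X"
    using zpw_closed[OF b] by (auto simp: block_rel_def)
  show "refl_on X (block_rel X f P)"
    by (rule refl_onI) (auto simp: block_rel_def intro!: exI[of _ 0])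
  show "sym (block_rel X f P)"
  proof (rule symI)
    fix x y
    assume "(x, y) \<in> block_rel X f P"
    then obtain k where x: "x \<in> X" and k: "zpw X f (P * k) x = x" "y = zpw X f k x"
      by (auto simp: block_rel_def)
    have "zpw X f (P * -k) y = y"
      unfolding k(2) zpw_fixed_shift_iff[OF b x] using zpw_fixed_mult[OF b x k(1), of "-1"] by simp
    moreover have "zpw X f (-k) y = x" using zpw_add[OF b x, of "-k" k] k(2) by simp
    moreover have "y \<in> X" using zpw_closed[OF b x] k(2) by simp
    ultimately show "(y, x) \<in> block_rel X f P" unfolding block_rel_def by blast
  qed
  show "trans (block_rel X f P)"
  proof (rule transI)
    fix x y z
    assume "(x, y) \<in> block_rel X f P" "(y, z) \<in> block_rel X f P"
    then obtain k k' where x: "x \<in> X" and k: "zpw X f (P * k) x = x" "y = zpw X f k x"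
      and k': "zpw X f (P * k') y = y" "z = zpw X f k' y"
      by (auto simp: block_rel_def)
    have "zpw X f (P * k') x = x" using k' unfolding k(2) zpw_fixed_shift_iff[OF b x] by blast
    then have "zpw X f (P * (k' + k)) x = x"
      using zpw_add[OF b x, of "P * k'" "P * k"] k(1) by (simp add: distrib_left)
    moreover have "z = zpw X f (k' + k) x" using k'(2) k(2) zpw_add[OF b x, of k' k] by simp
    ultimately show "(x, z) \<in> block_rel X f P" unfolding block_rel_def using x by blast
  qed
qed

lemma block_rel_zpw:
  assumes b: "bij_betw f X X" and r: "(x, y) \<in> block_rel X f P"
  shows "(zpw X f c x, zpw X f c y) \<in> block_rel X f P"
proof -
  obtain k where x: "x \<in> X" and k: "zpw X f (P * k) x = x" "y = zpw X f k x"
    using r by (auto simp: block_rel_def)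
  have "zpw X f c y = zpw X f k (zpw X f c x)"
    unfolding k(2) using zpw_add[OF b x, of c k] zpw_add[OF b x, of k c] by (simp add: add.commute)
  moreover have "zpw X f (P * k) (zpw X f c x) = zpw X f c x"
    using k(1) zpw_fixed_shift_iff[OF b x] by blast
  ultimately show ?thesis unfolding block_rel_def using zpw_closed[OF b x] by blast
qed

lemma block_rel_tau:
  assumes A: "BS_action m n X \<beta> \<tau>" and P: "prime P" and n: "n \<noteq> 0"
    and deep: "period_multiplicity_gt X \<beta> P (multiplicity P n) x"
    and r: "(x, y) \<in> block_rel X \<beta> P"
  shows "(\<tau> x, \<tau> y) \<in> block_rel X \<beta> P"
proof -
  note b = BS_action_bij(1)[OF A] and t = BS_action_bij(2)[OF A]
  obtain k where x: "x \<in> X" and k: "zpw X \<beta> (P * k) x = x" "y = zpw X \<beta> k x"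
    using r by (auto simp: block_rel_def)
  obtain L where L: "L > 0" "\<And>i. zpw X \<beta> i x = x \<longleftrightarrow> L dvd i"
    and vL: "multiplicity P L > multiplicity P n"
    using deep by (auto simp: period_multiplicity_gt_def zpw_period_def)
  have Lk: "L dvd P * k" using L(2) k(1) by simp
  \<comment> \<open>Up to the period, \<open>k\<close> is a multiple of \<open>n\<close>, which \<open>\<tau>\<close> turns into a multiple of \<open>m\<close>.\<close>
  obtain j where j: "L dvd k - n * j"
    using solvable_mod_of_dvd_prime_mult[OF P L(1) n vL Lk] by blast
  have "y = zpw X \<beta> (n * j) x" using k(2) zpw_eq_iff[OF b x] L(2) j by simp
  then have ty: "\<tau> y = zpw X \<beta> (m * j) (\<tau> x)" using BS_action_conj_mult[OF A x] by simp
  have "L dvd P * k - P * (k - n * j)"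
    using Lk j by (intro dvd_diff) simp_all
  moreover have "P * k - P * (k - n * j) = n * (P * j)" by (simp add: algebra_simps)
  ultimately have "L dvd n * (P * j)" by simp
  then have "zpw X \<beta> (m * (P * j)) (\<tau> x) = \<tau> x"
    using BS_action_tau_fixed_iff[OF A x] L(2) by simp
  then show ?thesis unfolding block_rel_def using ty bij_betw_apply[OF t x]
    by (auto intro!: exI[of _ "m * j"] simp: mult.left_commute)
qed

lemma block_rel_gmaps:
  assumes A: "BS_action m n X \<beta> \<tau>" and P: "prime P"
    and m: "m \<noteq> 0" and n: "n \<noteq> 0" and e: "multiplicity P m = multiplicity P n"
    and deep: "\<forall>x\<in>X. period_multiplicity_gt X \<beta> P (multiplicity P n) x"
    and g: "g \<in> gmaps X \<beta> \<tau>" and r: "(x, y) \<in> block_rel X \<beta> P"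
  shows "(g x, g y) \<in> block_rel X \<beta> P"
  using g
proof induction
  case gm_id
  then show ?case using r by simp
next
  case (gm_b g)
  then show ?case using block_rel_zpw[OF BS_action_bij(1)[OF A] gm_b(2), of 1] by (simp add: zpw_1)
next
  case (gm_bi g)
  then show ?case using block_rel_zpw[OF BS_action_bij(1)[OF A] gm_bi(2), of "-1"] by (simp add: zpw_minus_1)
next
  case (gm_t g)
  have "g x \<in> X" using gm_t(2) by (simp add: block_rel_def)
  then show ?case using block_rel_tau[OF A P n _ gm_t(2)] deep by simp
next
  case (gm_ti g)
  have "g x \<in> X" using gm_ti(2) by (simp add: block_rel_def)
  then show ?case using block_rel_tau[OF BS_action_swap[OF A] P m _ gm_ti(2)] deep e by simp
qed

lemma block_rel_ne_Id_on:
  assumes x: "x \<in> X" and L: "zpw_period X f x L"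
    and P: "prime P" and "P dvd L"
  shows "block_rel X f P \<noteq> Id_on X"
proof -
  obtain L' where L': "L = P * L'" using \<open>P dvd L\<close> by blast
  have L_pos: "L > 0" and L_fix: "\<And>i. zpw X f i x = x \<longleftrightarrow> L dvd i"
    using L by (auto simp: zpw_period_def)
  have "P > 1" using P by (simp add: prime_gt_1_int)
  with L_pos L' have "0 < L'" "L' < L" by (auto simp: zero_less_mult_iff)
  then have "zpw X f L' x \<noteq> x" using L_fix by (auto dest: zdvd_imp_le)
  moreover have "zpw X f (P * L') x = x" using L_fix L' by simp
  ultimately have "(x, zpw X f L' x) \<in> block_rel X f P" "(x, zpw X f L' x) \<notin> Id_on X"
    using x by (auto simp: block_rel_def)
  then show ?thesis by blast
qed

lemma block_rel_ne_Times:
  assumes b: "bij_betw f X X" and x: "x \<in> X" and L: "zpw_period X f x L" and "infinite X"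
  shows "block_rel X f P \<noteq> X \<times> X"
proof
  have "block_rel X f P `` {x} \<subseteq> (\<lambda>i. zpw X f i x) ` {0..<L}"
  proof
    fix y
    assume "y \<in> block_rel X f P `` {x}"
    then obtain k where k: "y = zpw X f k x" by (auto simp: block_rel_def)
    have "zpw X f (k - k mod L) x = x"
      using L by (simp add: zpw_period_def minus_mod_eq_mult_div)
    then have "y = zpw X f (k mod L) x" using k zpw_eq_iff[OF b x, of k "k mod L"] by simp
    moreover have "k mod L \<in> {0..<L}" using L by (simp add: zpw_period_def)
    ultimately show "y \<in> (\<lambda>i. zpw X f i x) ` {0..<L}" by blast
  qed
  then have "finite (block_rel X f P `` {x})" by (rule finite_subset) simp
  moreover assume "block_rel X f P = X \<times> X"
  then have "block_rel X f P `` {x} = X" using x by auto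
  ultimately show False using \<open>infinite X\<close> by simp
qed

lemma highly_transitive_imp_primitive:
  assumes ht: "highly_transitive_action X \<beta> \<tau>"
  shows "primitive_action X \<beta> \<tau>"
  unfolding primitive_action_def
proof (intro allI impI)
  fix R
  assume R: "equiv X R \<and> (\<forall>g\<in>gmaps X \<beta> \<tau>. \<forall>(x, y)\<in>R. (g x, g y) \<in> R)"
  then have R_sub: "R \<subseteq> X \<times> X" and R_refl: "\<And>x. x \<in> X \<Longrightarrow> (x, x) \<in> R"
    by (auto simp: equiv_def refl_on_def)
  show "R = Id_on X \<or> R = X \<times> X"
  proof (rule ccontr)
    assume "\<not> ?thesis"
    then have "\<not> R \<subseteq> Id_on X" "\<not> X \<times> X \<subseteq> R" using R_sub R_refl by auto
    obtain x y where xy: "(x, y) \<in> R" "x \<noteq> y" using \<open>\<not> R \<subseteq> Id_on X\<close> R_sub by auto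
    obtain u v where uv: "u \<in> X" "v \<in> X" "(u, v) \<notin> R" using \<open>\<not> X \<times> X \<subseteq> R\<close> by auto
    have "u \<noteq> v" using uv R_refl by blast
    have "length [x, y] = 2 \<and> length [u, v] = 2 \<and> distinct [x, y] \<and> distinct [u, v] \<and>
        set [x, y] \<subseteq> X \<and> set [u, v] \<subseteq> X \<longrightarrow> (\<exists>g\<in>gmaps X \<beta> \<tau>. map g [x, y] = [u, v])"
      using ht unfolding highly_transitive_action_def by blast
    then obtain g where "g \<in> gmaps X \<beta> \<tau>" "g x = u" "g y = v"
      using xy uv \<open>u \<noteq> v\<close> R_sub by auto
    then show False using R xy uv by fastforce
  qed
qed

lemma phenotype_prime_witness:
  assumes b: "bij_betw \<beta> X X" and x0: "x0 \<in> X"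
    and "phenotype m n X \<beta> x0 \<noteq> 1" and "phenotype m n X \<beta> x0 \<noteq> \<infinity>"
  obtains L and P :: int where "zpw_period X \<beta> x0 L" and "prime P"
    and "multiplicity P m = multiplicity P n" and "multiplicity P L > multiplicity P n"
proof -
  have "b_index X \<beta> x0 \<noteq> \<infinity>"
  proof
    assume "b_index X \<beta> x0 = \<infinity>"
    with assms(4) show False by (simp add: phenotype_def Ph_def)
  qed
  then obtain L where L: "zpw_period X \<beta> x0 L"
    using b_index_finite_imp_period[OF b x0] by blast
  let ?S = "{p::nat. prime p \<and> multiplicity (int p) m = multiplicity (int p) n
                    \<and> multiplicity p (nat L) > multiplicity (int p) n}"
  have ph: "phenotype m n X \<beta> x0 = enat (\<Prod>p\<in>?S. p ^ multiplicity p (nat L))"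
    using L by (simp add: phenotype_def Ph_def b_index_eq_period)
  have "?S \<noteq> {}"
  proof
    assume "?S = {}"
    with ph have "phenotype m n X \<beta> x0 = 1" unfolding \<open>?S = {}\<close> by (simp add: one_enat_def)
    with assms(3) show False ..
  qed
  then obtain p where p: "p \<in> ?S" by blast
  have "0 < L" using L by (simp add: zpw_period_def)
  with p multiplicity_int_int[of p "nat L"] show ?thesis
    by (intro that[OF L, of "int p"]) simp_all
qed

theorem mainTheorem14:
  fixes m n :: int and q :: enat and X :: "'a set" and \<beta> \<tau> :: "'a \<Rightarrow> 'a" and x0 :: 'a
  assumes "m \<noteq> 0" and "n \<noteq> 0"
    and "is_phenotype m n q" and "q \<noteq> 1" and "q \<noteq> \<infinity>"
    and "BS_action m n X \<beta> \<tau>" and "transitive_action X \<beta> \<tau>" and "infinite X"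
    and "x0 \<in> X" and "phenotype m n X \<beta> x0 = q"
  shows "\<not> primitive_action X \<beta> \<tau> \<and> \<not> highly_transitive_action X \<beta> \<tau>"
proof -
  note A = assms(6) and b = BS_action_bij(1)[OF assms(6)]
  obtain L and P :: int where L: "zpw_period X \<beta> x0 L" and P: "prime P"
    and e: "multiplicity P m = multiplicity P n" and vL: "multiplicity P L > multiplicity P n"
    using phenotype_prime_witness[OF b assms(9)] assms(4,5,10) by metis
  have "period_multiplicity_gt X \<beta> P (multiplicity P n) x" if "x \<in> X" for x
  proof -
    obtain g where "g \<in> gmaps X \<beta> \<tau>" "g x0 = x" using assms(7,9) \<open>x \<in> X\<close> by (auto simp: transitive_action_def)
    with L vL show ?thesis using period_multiplicity_gt_gmaps[OF A P assms(1,2) e _ assms(9)]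
      by (auto simp: period_multiplicity_gt_def)
  qed
  then have "\<forall>g\<in>gmaps X \<beta> \<tau>. \<forall>(x, y)\<in>block_rel X \<beta> P. (g x, g y) \<in> block_rel X \<beta> P"
    using block_rel_gmaps[OF A P assms(1,2) e] by blast
  moreover have "P dvd L" using vL not_dvd_imp_multiplicity_0 by fastforce
  moreover have "block_rel X \<beta> P \<noteq> X \<times> X"
    using block_rel_ne_Times[OF b assms(9) L assms(8)] .
  ultimately have "\<not> primitive_action X \<beta> \<tau>"
    unfolding primitive_action_def
    using block_rel_equiv[OF b] block_rel_ne_Id_on[OF assms(9) L P] by blast
  then show ?thesis using highly_transitive_imp_primitive by blast
qed

end
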